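(* Let $n\ge 3$ be an odd integer and $k$ a positive integer with $2k\mid n+1$, and put $t=\frac{n(n+1)}{2k}$. For $1\le i\le \frac{n+1}{2k}$ and $1\le j\le k$ define $$t_{2i-1,j}=n-\bigl(2k(i-1)+(j-1)\bigr),\qquad t_{2i,j}=n-2ki+j,$$ and for $1\le j\le k$ let $T_j=\{t_{i,j}: 1\le i\le \tfrac{n+1}{k}\}$ (the $j$-th column of the $\frac{n+1}{k}\times k$ matrix $(t_{ij})$). Then $T_1,\ldots,T_k$ are pairwise disjoint, $\bigcup_{j=1}^k T_j=\{0,1,\ldots,n\}$, and $\sum_{x\in T_j}x=t$ for every $1\le j\le k$. In particular the sets $T_j\setminus\{0\}$ form a partition of $\{1,\ldots,n\}$ into $k$ sets each with sum $t$. *)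

theory Defs
  imports Main
begin

definition t_entry :: "int \<Rightarrow> int \<Rightarrow> int \<Rightarrow> int \<Rightarrow> int" where
  "t_entry n k i j =
     (if odd i then n - (2 * k * ((i + 1) div 2 - 1) + (j - 1))
      else n - 2 * k * (i div 2) + j)"

definition T_col :: "int \<Rightarrow> int \<Rightarrow> int \<Rightarrow> int set" where
  "T_col n k j = (\<lambda>i. t_entry n k i j) ` {1 .. (n + 1) div k}"

end

theory Submission
  imports Defs
begin

text \<open>Write \<open>n + 1 = 2km\<close>. Rows \<open>2q+1\<close> and \<open>2q+2\<close> of the matrix together fill the block
  \<open>n - 2kq - r\<close>, \<open>0 \<le> r < 2k\<close>: the odd row contributes \<open>r = j - 1 < k\<close> and the even row
  \<open>r = 2k - j \<ge> k\<close>. Hence \<open>(i, j) \<mapsto> n - t\<^sub>i\<^sub>j\<close> is a bijection from the index grid onto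
  \<open>{0..<n+1}\<close>, which gives the partition. In column \<open>j\<close> the two entries of a row pair add up to
  \<open>2n + 1 - 2k(2q+1)\<close>, independently of \<open>j\<close>, so all columns have the same sum, namely
  \<open>n(n+1)/(2k)\<close>.\<close>

lemma t_entry_odd_row [simp]: "t_entry n k (2*q + 1) j = n - (2*k*q + (j - 1))"
  unfolding t_entry_def by simp

lemma t_entry_even_row [simp]: "t_entry n k (2*q + 2) j = n - (2*k*q + (2*k - j))"
  unfolding t_entry_def by (simp add: algebra_simps)

definition cell_of :: "int \<Rightarrow> int \<Rightarrow> int \<Rightarrow> int \<times> int" where
  "cell_of k q r = (if r < k then (2*q + 1, r + 1) else (2*q + 2, 2*k - r))"

lemma offset_cell_of: "(\<lambda>(i, j). n - t_entry n k i j) (cell_of k q r) = 2*k*q + r"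
  unfolding cell_of_def by simp

lemma cell_of_mem_grid:
  assumes "q \<in> {0..<m}" and "r \<in> {0..<2*k}"
  shows "cell_of k q r \<in> {1..2*m} \<times> {1..k}"
  using assms unfolding cell_of_def by auto

lemma grid_cell_of_cases:
  assumes "p \<in> {1..2*m} \<times> {1..k}"
  obtains q r where "q \<in> {0..<m}" "r \<in> {0..<2*k}" "p = cell_of k q r"
proof -
  obtain i j where p: "p = (i, j)" and i: "i \<in> {1..2*m}" and j: "j \<in> {1..k}"
    using assms by blast
  show ?thesis
  proof (cases "odd i")
    case True
    then obtain q where "i = 2*q + 1" by (metis oddE)
    with p i j show ?thesis
      by (intro that[of q "j - 1"]) (auto simp: cell_of_def)
  next
    case False
    then obtain q where "i = 2*q + 2"
      by (auto elim!: evenE intro: that[of "q - 1" for q])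
    with p i j show ?thesis
      by (intro that[of q "2*k - j"]) (auto simp: cell_of_def)
  qed
qed

lemma offset_bij_grid:
  assumes "k \<ge> 1"
  shows "bij_betw (\<lambda>(i, j). n - t_entry n k i j) ({1..2*m} \<times> {1..k}) {0..<2*k*m}"
proof -
  let ?g = "\<lambda>x. cell_of k (x div (2*k)) (x mod (2*k))"
  have offset_g: "(\<lambda>(i, j). n - t_entry n k i j) (?g x) = x" for x
    unfolding offset_cell_of by simp
  have g_offset: "?g ((\<lambda>(i, j). n - t_entry n k i j) p) = p"
    if p: "p \<in> {1..2*m} \<times> {1..k}" for p
  proof -
    obtain q r where qr: "q \<in> {0..<m}" "r \<in> {0..<2*k}" "p = cell_of k q r"
      using grid_cell_of_cases[OF p] by blast
    have "(2*k*q + r) div (2*k) = q" "(2*k*q + r) mod (2*k) = r"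
      using qr(2) by (simp_all add: add.commute)
    with qr(3) offset_cell_of[of n k q r] show ?thesis
      by simp
  qed
  have range_offset: "(\<lambda>(i, j). n - t_entry n k i j) p \<in> {0..<2*k*m}"
    if p: "p \<in> {1..2*m} \<times> {1..k}" for p
  proof -
    obtain q r where qr: "q \<in> {0..<m}" "r \<in> {0..<2*k}" "p = cell_of k q r"
      using grid_cell_of_cases[OF p] by blast
    have "0 \<le> 2*k*q" and "2*k*q \<le> 2*k*(m - 1)"
      using qr(1) assms by (auto intro: mult_left_mono)
    with qr offset_cell_of[of n k q r] show ?thesis
      by (simp add: algebra_simps)
  qed
  have g_grid: "?g x \<in> {1..2*m} \<times> {1..k}" if x: "x \<in> {0..<2*k*m}" for x
  proof (rule cell_of_mem_grid)
    have "2*k*(x div (2*k)) + x mod (2*k) = x" and "0 \<le> x mod (2*k)"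
      using assms by simp_all
    then have "2*k*(x div (2*k)) < 2*k*m"
      using x by (simp only: atLeastLessThan_iff) linarith
    then show "x div (2*k) \<in> {0..<m}"
      using assms x by (simp add: pos_imp_zdiv_nonneg_iff)
    show "x mod (2*k) \<in> {0..<2*k}"
      using assms by simp
  qed
  show ?thesis
    by (rule bij_betw_byWitness[where f' = ?g]) (use offset_g g_offset range_offset g_grid in blast)+
qed

lemma column_sum:
  assumes "m \<ge> 0"
  shows "(\<Sum>i\<in>{1..2*m}. t_entry n k i j) = m*(2*n + 1) - 2*k*m^2"
  using assms
proof (induction m rule: int_ge_induct)
  case base
  then show ?case by simp
next
  case (step m)
  have "{1..2*(m + 1)} = insert (2*m + 2) (insert (2*m + 1) {1..2*m})"
    using step.hyps by auto
  then have "(\<Sum>i\<in>{1..2*(m + 1)}. t_entry n k i j)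
      = (t_entry n k (2*m + 1) j + t_entry n k (2*m + 2) j) + (\<Sum>i\<in>{1..2*m}. t_entry n k i j)"
    by simp
  also have "\<dots> = (2*n + 1 - 2*k*(2*m + 1)) + (m*(2*n + 1) - 2*k*m^2)"
    unfolding t_entry_odd_row t_entry_even_row step.IH by (simp add: algebra_simps)
  also have "\<dots> = (m + 1)*(2*n + 1) - 2*k*(m + 1)^2"
    by (simp add: algebra_simps power2_eq_square)
  finally show ?case .
qed

context
  fixes n k m :: int
  assumes k_pos: "k \<ge> 1" and m_pos: "m \<ge> 1" and n_eq: "n + 1 = 2*k*m"
begin

lemma T_col_eq_image: "T_col n k j = (\<lambda>i. t_entry n k i j) ` {1..2*m}"
proof -
  have "(n + 1) div k = 2*m"
    using n_eq k_pos by simp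
  then show ?thesis
    unfolding T_col_def by simp
qed

lemma t_entry_inj:
  assumes "(i, j) \<in> {1..2*m} \<times> {1..k}" and "(i', j') \<in> {1..2*m} \<times> {1..k}"
    and "t_entry n k i j = t_entry n k i' j'"
  shows "i = i'" and "j = j'"
proof -
  have "(i, j) = (i', j')"
    by (rule inj_onD[OF bij_betw_imp_inj_on[OF offset_bij_grid[OF k_pos, of n m]]])
      (use assms in auto)
  then show "i = i'" and "j = j'" by simp_all
qed

lemma T_col_disjoint:
  assumes "j1 \<in> {1..k}" "j2 \<in> {1..k}" "j1 \<noteq> j2"
  shows "T_col n k j1 \<inter> T_col n k j2 = {}"
  using assms t_entry_inj(2) unfolding T_col_eq_image by fastforce

lemma T_col_Union: "(\<Union>j\<in>{1..k}. T_col n k j) = {0..n}"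
proof -
  have "(\<Union>j\<in>{1..k}. T_col n k j) = (\<lambda>(i, j). t_entry n k i j) ` ({1..2*m} \<times> {1..k})"
    unfolding T_col_eq_image by auto
  also have "\<dots> = (\<lambda>x. n - x) ` ((\<lambda>(i, j). n - t_entry n k i j) ` ({1..2*m} \<times> {1..k}))"
    by (simp add: image_image case_prod_unfold)
  also have "\<dots> = (\<lambda>x. n - x) ` {0..<n + 1}"
    using bij_betw_imp_surj_on[OF offset_bij_grid[OF k_pos]] n_eq by simp
  also have "\<dots> = {0..n}"
    by (simp add: atLeastLessThanPlusOne_atLeastAtMost_int)
  finally show ?thesis .
qed

lemma T_col_sum:
  assumes "j \<in> {1..k}"
  shows "(\<Sum>x\<in>T_col n k j. x) = n*m"
proof -
  have "inj_on (\<lambda>i. t_entry n k i j) {1..2*m}"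
    using assms t_entry_inj(1) by (auto intro!: inj_onI)
  then have "(\<Sum>x\<in>T_col n k j. x) = (\<Sum>i\<in>{1..2*m}. t_entry n k i j)"
    unfolding T_col_eq_image by (simp add: sum.reindex)
  also have "\<dots> = m*(2*n + 1) - (2*k*m)*m"
    using column_sum[of m n k j] m_pos by (simp add: power2_eq_square algebra_simps)
  also have "\<dots> = n*m"
    unfolding n_eq[symmetric] by (simp add: algebra_simps)
  finally show ?thesis .
qed

lemma T_col_nonzero_entry:
  assumes "j \<in> {1..k}"
  shows "n - (j - 1) \<in> T_col n k j - {0}"
proof -
  have "n \<ge> k"
    using n_eq k_pos m_pos by (smt (verit) mult_le_cancel_left1)
  then show ?thesis
    unfolding T_col_eq_image using assms m_pos t_entry_odd_row[of n k 0 j] by force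
qed

end

theorem mainTheorem3:
  fixes n k :: int
  assumes "n \<ge> 3" and "odd n" and "k \<ge> 1" and "(2 * k) dvd (n + 1)"
  shows "(\<forall>j1 \<in> {1..k}. \<forall>j2 \<in> {1..k}. j1 \<noteq> j2 \<longrightarrow> T_col n k j1 \<inter> T_col n k j2 = {})
       \<and> (\<Union>j \<in> {1..k}. T_col n k j) = {0..n}
       \<and> (\<forall>j \<in> {1..k}. (\<Sum>x \<in> T_col n k j. x) = n * (n + 1) div (2 * k))
       \<and> (\<forall>j \<in> {1..k}. (\<Sum>x \<in> T_col n k j - {0}. x) = n * (n + 1) div (2 * k))
       \<and> (\<forall>j \<in> {1..k}. T_col n k j - {0} \<noteq> {})
       \<and> (\<Union>j \<in> {1..k}. T_col n k j - {0}) = {1..n}"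
proof -
  obtain m where n_eq: "n + 1 = 2*k*m"
    using assms(4) by (metis dvdE)
  note k = \<open>k \<ge> 1\<close>
  have m: "m \<ge> 1"
    using n_eq k \<open>n \<ge> 3\<close> by (smt (verit) mult_nonneg_nonpos)
  have target: "n * (n + 1) div (2 * k) = n * m"
    using n_eq k by simp
  have "(\<Sum>x\<in>T_col n k j - {0}. x) = (\<Sum>x\<in>T_col n k j. x)" for j
    by (simp add: sum_diff1 T_col_eq_image[OF k m n_eq])
  moreover have "(\<Union>j\<in>{1..k}. T_col n k j - {0}) = {0..n} - {0}"
    using T_col_Union[OF k m n_eq] by blast
  moreover have "{0..n} - {0} = {1..n}"
    by auto
  ultimately show ?thesis
    using T_col_disjoint[OF k m n_eq] T_col_Union[OF k m n_eq] T_col_sum[OF k m n_eq]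
      T_col_nonzero_entry[OF k m n_eq] target
    by (metis empty_iff)
qed

end
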